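(* Fix integers $n\ge m\ge 0$, $N_T\ge1$, and a nonzero homogeneous polynomial $Q$ of degree $n-m$ in $a^\dagger_1,\dots,a^\dagger_{N_T}$ (a pure $(n-m)$-photon, $N_T$-mode target state). Let $N=\max\{n,N_T+m\}$ and $M=m$, and consider the optimal configuration: input $\prod_{i=1}^n a^\dagger_i|0\rangle$ on $N$ modes and heralding pattern $(1,\dots,1)$ on the last $m$ modes. Equating the coefficients of all monomials in $a^\dagger_1,\dots,a^\dagger_{N-M}$ in the identity $\gamma G=Q$ gives a finite system of polynomial equations $f_1=\dots=f_s=0$ in the unknowns $\gamma$ and $A_{i,j}$ ($1\le i,j\le N$). If this system admits a Nullstellensatz certificate, i.e. polynomials $\beta_1,\dots,\beta_s$ in these unknowns with complex coefficients such that $1=\sum_{i=1}^s\beta_i f_i$, then $Q$ cannot be generated, for any number of modes, from any multi-mode Fock input state containing $n$ photons heralded by any photon-number pattern containing $m$ photons.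
   Context: Heralded linear-optical state generation model. States with a fixed photon number are homogeneous polynomials in commuting variables $a^\dagger_1,\dots,a^\dagger_N$ applied to the vacuum. Given $N$ modes, an arbitrary complex $N\times N$ matrix $A$ (not required to be unitary), and a Fock input $\prod_{i=1}^N\frac{1}{\sqrt{n_i!}}(a^\dagger_{i,\mathrm{in}})^{n_i}|0\rangle$, the output is $F|0\rangle$ with $F=\prod_{i=1}^N\frac{1}{\sqrt{n_i!}}\big(\sum_{j=1}^N A_{i,j}a^\dagger_j\big)^{n_i}$. Heralding the last $M$ modes on the pattern $(m_1,\dots,m_M)$ (entries $\ge0$, zero meaning vacuum), $m=\sum_j m_j$, gives $G=\frac{1}{\prod_j m_j!}\,\frac{\partial^{m}F}{\partial(a^\dagger_{N-M+1})^{m_1}\cdots\partial(a^\dagger_N)^{m_M}}\Big|_{a^\dagger_{N-M+1}=\cdots=a^\dagger_N=0}$, a polynomial in $a^\dagger_1,\dots,a^\dagger_{N-M}$. A target $Q$ on $N_T\le N-M$ modes is viewed as a polynomial in $a^\dagger_1,\dots,a^\dagger_{N-M}$ (remaining target-side modes in vacuum). $Q$ can be generated from a given input and heralding pattern if there exist a complex $N\times N$ matrix $A$ and $\gamma\in\mathbb{C}$ with $\gamma G=Q$. *)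

theory Defs
  imports Complex_Main "HOL-Library.Poly_Mapping"
begin

text \<open>Polynomials in commuting variables x_0, x_1, ... (mode creation operators
a^dagger_{i+1} = x_i, 0-indexed) with coefficients in a commutative ring 'a are
represented as finitely supported maps from exponent vectors (monomials) to coefficients.\<close>

type_synonym 'a mpoly = "(nat \<Rightarrow>\<^sub>0 nat) \<Rightarrow>\<^sub>0 'a"

definition mvar :: "nat \<Rightarrow> 'a::comm_semiring_1 mpoly" where
  "mvar i = Poly_Mapping.single (Poly_Mapping.single i 1) 1"

definition mconst :: "'a::comm_semiring_1 \<Rightarrow> 'a mpoly" where
  "mconst c = Poly_Mapping.single 0 c"

definition mdeg :: "(nat \<Rightarrow>\<^sub>0 nat) \<Rightarrow> nat" where
  "mdeg \<alpha> = (\<Sum>i\<in>Poly_Mapping.keys \<alpha>. Poly_Mapping.lookup \<alpha> i)"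

definition mpderiv :: "nat \<Rightarrow> 'a::comm_semiring_1 mpoly \<Rightarrow> 'a mpoly" where
  "mpderiv i p = (\<Sum>\<alpha>\<in>Poly_Mapping.keys p.
      Poly_Mapping.single (\<alpha> - Poly_Mapping.single i 1) (of_nat (Poly_Mapping.lookup \<alpha> i) * Poly_Mapping.lookup p \<alpha>))"

definition mset_zero :: "nat set \<Rightarrow> 'a::comm_semiring_1 mpoly \<Rightarrow> 'a mpoly" where
  "mset_zero S p = (\<Sum>\<alpha>\<in>Poly_Mapping.keys p.
      if (\<forall>i\<in>S. Poly_Mapping.lookup \<alpha> i = 0) then Poly_Mapping.single \<alpha> (Poly_Mapping.lookup p \<alpha>) else 0)"

text \<open>The output polynomial F for N modes, transfer matrix A, Fock input ns
(ns i photons in mode i, i < N).  The coefficient embedding emb maps complex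
scalars into the coefficient ring (identity for complex coefficients).\<close>
definition Fout :: "(complex \<Rightarrow> 'a::comm_semiring_1) \<Rightarrow> nat \<Rightarrow> (nat \<Rightarrow> nat \<Rightarrow> 'a)
    \<Rightarrow> (nat \<Rightarrow> nat) \<Rightarrow> 'a mpoly" where
  "Fout emb N A ns =
     (\<Prod>i<N. mconst (emb (complex_of_real (1 / sqrt (real (fact (ns i))))))
              * (\<Sum>j<N. mconst (A i j) * mvar j) ^ ns i)"

text \<open>Heralding the last M of the N modes on pattern ms (ms j photons in mode N-M+j, j < M):
G = (1 / prod_j ms_j!) * d^m F / (d x_{N-M}^{ms 0} ... d x_{N-1}^{ms (M-1)}) at x_{N-M} = ... = x_{N-1} = 0.\<close>
definition herald :: "(complex \<Rightarrow> 'a::comm_semiring_1) \<Rightarrow> nat \<Rightarrow> nat \<Rightarrow> (nat \<Rightarrow> nat)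
    \<Rightarrow> 'a mpoly \<Rightarrow> 'a mpoly" where
  "herald emb N M ms F =
     mconst (emb (1 / of_nat (\<Prod>j<M. fact (ms j))))
     * mset_zero {N - M..<N}
         (fold (\<lambda>j q. (mpderiv (N - M + j) ^^ ms j) q) [0..<M] F)"

definition Gout :: "(complex \<Rightarrow> 'a::comm_semiring_1) \<Rightarrow> nat \<Rightarrow> nat \<Rightarrow> (nat \<Rightarrow> nat \<Rightarrow> 'a)
    \<Rightarrow> (nat \<Rightarrow> nat) \<Rightarrow> (nat \<Rightarrow> nat) \<Rightarrow> 'a mpoly" where
  "Gout emb N M A ns ms = herald emb N M ms (Fout emb N A ns)"

definition generable :: "nat \<Rightarrow> nat \<Rightarrow> (nat \<Rightarrow> nat) \<Rightarrow> (nat \<Rightarrow> nat) \<Rightarrow> complex mpoly \<Rightarrow> bool" where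
  "generable N M ns ms Q \<longleftrightarrow>
     (\<exists>A :: nat \<Rightarrow> nat \<Rightarrow> complex. \<exists>\<gamma> :: complex. mconst \<gamma> * Gout id N M A ns ms = Q)"

definition homog_target :: "nat \<Rightarrow> nat \<Rightarrow> complex mpoly \<Rightarrow> bool" where
  "homog_target NT d Q \<longleftrightarrow> Q \<noteq> 0 \<and> (\<forall>\<alpha>\<in>Poly_Mapping.keys Q. Poly_Mapping.keys \<alpha> \<subseteq> {..<NT} \<and> mdeg \<alpha> = d)"

text \<open>Symbolic unknowns: polynomial ring over complex in variables y_0 (= gamma) and
y_{1 + i*N + j} (= A_{i,j}, i,j < N).\<close>
type_synonym upoly = "complex mpoly"

definition gamma_var :: upoly where "gamma_var = mvar 0"

definition A_var :: "nat \<Rightarrow> nat \<Rightarrow> nat \<Rightarrow> upoly" where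
  "A_var N i j = mvar (1 + i * N + j)"

text \<open>gamma G - Q as a polynomial in the mode variables whose coefficients are
polynomials in the unknowns gamma, A_{i,j}; for the optimal configuration
(input one photon in each of modes 0..n-1 of N modes, heralding pattern (1,...,1) on the last m modes).\<close>
definition opt_system :: "nat \<Rightarrow> nat \<Rightarrow> nat \<Rightarrow> complex mpoly \<Rightarrow> upoly mpoly" where
  "opt_system N n m Q =
     mconst gamma_var * Gout mconst N m (A_var N) (\<lambda>i. if i < n then 1 else 0) (\<lambda>j. 1)
     - Poly_Mapping.map mconst Q"

definition has_nullstellensatz_cert :: "upoly mpoly \<Rightarrow> bool" where
  "has_nullstellensatz_cert P \<longleftrightarrow>
     (\<exists>\<beta> :: (nat \<Rightarrow>\<^sub>0 nat) \<Rightarrow> upoly. (1::upoly) = (\<Sum>\<alpha>\<in>Poly_Mapping.keys P. \<beta> \<alpha> * Poly_Mapping.lookup P \<alpha>))"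

end

theory Submission
  imports Defs
begin

text \<open>
  Suppose \<open>\<gamma> G = Q\<close> for some network with \<open>n\<close> input and \<open>m\<close> heralded photons. List the
  input photons one by one, so that \<open>F\<close> becomes a product of \<open>n\<close> linear forms, and the heralded
  photons one by one, so that heralding becomes \<open>m\<close> first-order derivatives. Now substitute for
  the mode variables: keep the \<open>N\<^sub>T\<close> target modes, send the other unheralded modes to
  zero, and send each heralded mode to the sum of \<open>m\<close> fresh modes, one for each heralded photon
  it carries. The substituted linear forms describe an optimal network, and by the chain rule a
  derivative in a fresh mode is the derivative in the mode it replaces, so the optimal network also
  produces \<open>Q\<close> (which the substitution fixes). For the optimal configuration the pair
  \<open>(\<gamma>, A)\<close> is a common zero of the coefficient equations; evaluating the Nullstellensatz
  certificate there gives \<open>1 = 0\<close>.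
\<close>

lemma lookup_map:
  "f 0 = 0 \<Longrightarrow> Poly_Mapping.lookup (Poly_Mapping.map f p) k = f (Poly_Mapping.lookup p k)"
  by transfer (auto simp: when_def)

lemma poly_mapping_sum_single:
  "p = (\<Sum>\<alpha>\<in>Poly_Mapping.keys p. Poly_Mapping.single \<alpha> (Poly_Mapping.lookup p \<alpha>))"
  by (rule poly_mapping_eqI) (simp add: lookup_sum lookup_single when_def in_keys_iff)

lemma poly_mapping_single_induct [case_names zero single add]:
  fixes p :: "'x \<Rightarrow>\<^sub>0 'b::comm_monoid_add"
  assumes "P 0" and "\<And>\<alpha> c. P (Poly_Mapping.single \<alpha> c)" and "\<And>p q. P p \<Longrightarrow> P q \<Longrightarrow> P (p + q)"
  shows "P p"
proof -
  have "P (\<Sum>\<alpha>\<in>A. Poly_Mapping.single \<alpha> (Poly_Mapping.lookup p \<alpha>))" if "finite A" for A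
    using that by (induction A rule: finite_induct) (auto simp: assms)
  then show ?thesis
    by (subst poly_mapping_sum_single) simp
qed

section \<open>Evaluation homomorphisms\<close>

definition semiring_hom :: "('a::comm_semiring_1 \<Rightarrow> 'b::comm_semiring_1) \<Rightarrow> bool" where
  "semiring_hom h \<longleftrightarrow>
     h 0 = 0 \<and> h 1 = 1 \<and> (\<forall>a b. h (a + b) = h a + h b) \<and> (\<forall>a b. h (a * b) = h a * h b)"

lemma semiring_homD:
  assumes "semiring_hom h"
  shows "h 0 = 0" "h 1 = 1" "h (a + b) = h a + h b" "h (a * b) = h a * h b"
  using assms by (auto simp: semiring_hom_def)

lemma semiring_hom_sum: "semiring_hom h \<Longrightarrow> h (sum f A) = (\<Sum>x\<in>A. h (f x))"
  by (induction A rule: infinite_finite_induct) (auto simp: semiring_homD)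

lemma semiring_hom_prod: "semiring_hom h \<Longrightarrow> h (prod f A) = (\<Prod>x\<in>A. h (f x))"
  by (induction A rule: infinite_finite_induct) (auto simp: semiring_homD)

lemma semiring_hom_prod_list: "semiring_hom h \<Longrightarrow> h (prod_list xs) = prod_list (map h xs)"
  by (induction xs) (auto simp: semiring_homD)

lemma semiring_hom_diff:
  fixes h :: "'a::comm_ring_1 \<Rightarrow> 'b::comm_ring_1"
  assumes "semiring_hom h"
  shows "h (a - b) = h a - h b"
  using semiring_homD(3)[OF assms, of "a - b" b] by (simp add: eq_diff_eq)

lemma semiring_hom_id: "semiring_hom id"
  by (simp add: semiring_hom_def)

lemma semiring_hom_comp: "semiring_hom g \<Longrightarrow> semiring_hom h \<Longrightarrow> semiring_hom (g \<circ> h)"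
  by (simp add: semiring_hom_def)

lemma mconst_0 [simp]: "mconst 0 = 0"
  by (simp add: mconst_def)

lemma mconst_1 [simp]: "mconst 1 = 1"
  by (simp add: mconst_def)

lemma mconst_add: "mconst (a + b) = mconst a + mconst b"
  by (simp add: mconst_def single_add)

lemma mconst_mult: "mconst (a * b) = mconst a * mconst b"
  by (simp add: mconst_def mult_single)

lemma semiring_hom_mconst: "semiring_hom mconst"
  by (simp add: semiring_hom_def mconst_add mconst_mult)

lemma single_eq_mconst_mult: "Poly_Mapping.single \<alpha> c = mconst c * Poly_Mapping.single \<alpha> 1"
  by (simp add: mconst_def mult_single)

lemma mvar_power: "mvar i ^ k = Poly_Mapping.single (Poly_Mapping.single i k) 1"
  by (induction k) (auto simp: mvar_def mult_single single_add[symmetric])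

lemma single_one_eq_prod_mvar:
  "Poly_Mapping.single \<alpha> 1 = (\<Prod>i\<in>Poly_Mapping.keys \<alpha>. mvar i ^ Poly_Mapping.lookup \<alpha> i)"
proof -
  have "(\<Prod>i\<in>K. Poly_Mapping.single (f i) (1::'a)) = Poly_Mapping.single (\<Sum>i\<in>K. f i) 1"
    if "finite K" for K and f :: "nat \<Rightarrow> nat \<Rightarrow>\<^sub>0 nat"
    using that by (induction K rule: finite_induct) (auto simp: mult_single)
  then show ?thesis
    by (simp add: mvar_power flip: poly_mapping_sum_single)
qed

lemma mpoly_induct [case_names const var add mult]:
  fixes P :: "'a::comm_semiring_1 mpoly \<Rightarrow> bool"
  assumes const: "\<And>c. P (mconst c)" and var: "\<And>i. P (mvar i)"
    and add: "\<And>p q. P p \<Longrightarrow> P q \<Longrightarrow> P (p + q)" and mult: "\<And>p q. P p \<Longrightarrow> P q \<Longrightarrow> P (p * q)"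
  shows "P p"
proof (induction p rule: poly_mapping_single_induct)
  case zero
  then show ?case using const[of 0] by simp
next
  case (single \<alpha> c)
  have power: "P (x ^ k)" if "P x" for x k
    using that by (induction k) (use const[of 1] mult in auto)
  have "P (\<Prod>i\<in>K. mvar i ^ Poly_Mapping.lookup \<alpha> i)" if "finite K" for K
    using that by (induction K rule: finite_induct) (use const[of 1] mult power var in auto)
  then show ?case
    by (subst single_eq_mconst_mult) (simp add: mult const single_one_eq_prod_mvar)
qed (rule add)

definition monom_eval :: "(nat \<Rightarrow> 'b::comm_semiring_1) \<Rightarrow> (nat \<Rightarrow>\<^sub>0 nat) \<Rightarrow> 'b" where
  "monom_eval \<sigma> \<alpha> = (\<Prod>i\<in>Poly_Mapping.keys \<alpha>. \<sigma> i ^ Poly_Mapping.lookup \<alpha> i)"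

definition mpoly_eval ::
    "('a::comm_semiring_1 \<Rightarrow> 'b::comm_semiring_1) \<Rightarrow> (nat \<Rightarrow> 'b) \<Rightarrow> 'a mpoly \<Rightarrow> 'b" where
  "mpoly_eval h \<sigma> p = (\<Sum>\<alpha>\<in>Poly_Mapping.keys p. h (Poly_Mapping.lookup p \<alpha>) * monom_eval \<sigma> \<alpha>)"

lemma monom_eval_superset:
  "finite K \<Longrightarrow> Poly_Mapping.keys \<alpha> \<subseteq> K \<Longrightarrow> monom_eval \<sigma> \<alpha> = (\<Prod>i\<in>K. \<sigma> i ^ Poly_Mapping.lookup \<alpha> i)"
  unfolding monom_eval_def by (rule prod.mono_neutral_left) (auto simp: in_keys_iff)

lemma monom_eval_add: "monom_eval \<sigma> (\<alpha> + \<beta>) = monom_eval \<sigma> \<alpha> * monom_eval \<sigma> \<beta>"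
proof -
  let ?K = "Poly_Mapping.keys \<alpha> \<union> Poly_Mapping.keys \<beta>"
  have "monom_eval \<sigma> (\<alpha> + \<beta>) = (\<Prod>i\<in>?K. \<sigma> i ^ Poly_Mapping.lookup (\<alpha> + \<beta>) i)"
    by (rule monom_eval_superset) (use keys_add[of \<alpha> \<beta>] in auto)
  also have "\<dots> = (\<Prod>i\<in>?K. \<sigma> i ^ Poly_Mapping.lookup \<alpha> i) * (\<Prod>i\<in>?K. \<sigma> i ^ Poly_Mapping.lookup \<beta> i)"
    by (simp add: lookup_add power_add prod.distrib)
  also have "\<dots> = monom_eval \<sigma> \<alpha> * monom_eval \<sigma> \<beta>"
    by (subst (1 2) monom_eval_superset) auto
  finally show ?thesis .
qed

lemma mpoly_eval_zero [simp]: "mpoly_eval h \<sigma> 0 = 0"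
  by (simp add: mpoly_eval_def)

lemma mpoly_eval_single:
  "semiring_hom h \<Longrightarrow> mpoly_eval h \<sigma> (Poly_Mapping.single \<alpha> c) = h c * monom_eval \<sigma> \<alpha>"
  by (cases "c = 0") (auto simp: mpoly_eval_def semiring_homD)

lemma mpoly_eval_add:
  "semiring_hom h \<Longrightarrow> mpoly_eval h \<sigma> (p + q) = mpoly_eval h \<sigma> p + mpoly_eval h \<sigma> q"
  unfolding mpoly_eval_def
  by (rule setsum_keys_plus_distrib) (auto simp: semiring_homD distrib_right)

lemma mpoly_eval_mult:
  assumes "semiring_hom h"
  shows "mpoly_eval h \<sigma> (p * q) = mpoly_eval h \<sigma> p * mpoly_eval h \<sigma> q"
proof (induction p arbitrary: q rule: poly_mapping_single_induct)
  case (single \<alpha> c)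
  show ?case
  proof (induction q rule: poly_mapping_single_induct)
    case (single \<beta> d)
    show ?case
      using assms by (simp add: mult_single mpoly_eval_single monom_eval_add semiring_homD mult_ac)
  qed (simp_all add: mpoly_eval_add[OF assms] distrib_left)
qed (simp_all add: mpoly_eval_add[OF assms] distrib_right)

lemma mpoly_eval_mconst: "semiring_hom h \<Longrightarrow> mpoly_eval h \<sigma> (mconst c) = h c"
  by (simp add: mconst_def mpoly_eval_single monom_eval_def)

lemma mpoly_eval_mvar: "semiring_hom h \<Longrightarrow> mpoly_eval h \<sigma> (mvar i) = \<sigma> i"
  by (simp add: mvar_def mpoly_eval_single semiring_homD monom_eval_def)

lemma semiring_hom_mpoly_eval:
  assumes "semiring_hom h"
  shows "semiring_hom (mpoly_eval h \<sigma>)"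
proof -
  have "mpoly_eval h \<sigma> 1 = 1"
    using mpoly_eval_mconst[OF assms, of \<sigma> 1] semiring_homD(2)[OF assms] by simp
  then show ?thesis
    unfolding semiring_hom_def using mpoly_eval_add[OF assms] mpoly_eval_mult[OF assms] by simp
qed

lemma semiring_hom_mpoly_eqI:
  fixes f g :: "'a::comm_semiring_1 mpoly \<Rightarrow> 'b::comm_semiring_1"
  assumes "semiring_hom f" "semiring_hom g"
    and "\<And>c. f (mconst c) = g (mconst c)" "\<And>i. f (mvar i) = g (mvar i)"
  shows "f p = g p"
  by (induction p rule: mpoly_induct) (use assms in \<open>auto simp: semiring_homD\<close>)

lemma semiring_hom_mpoly_eval_comp:
  assumes g: "semiring_hom g" and h: "semiring_hom h"
  shows "g (mpoly_eval h \<sigma> p) = mpoly_eval (g \<circ> h) (g \<circ> \<sigma>) p"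
proof -
  have gh: "semiring_hom (g \<circ> h)"
    using g h by (rule semiring_hom_comp)
  have "(g \<circ> mpoly_eval h \<sigma>) p = mpoly_eval (g \<circ> h) (g \<circ> \<sigma>) p"
  proof (rule semiring_hom_mpoly_eqI)
    show "semiring_hom (g \<circ> mpoly_eval h \<sigma>)"
      using g semiring_hom_mpoly_eval[OF h] by (rule semiring_hom_comp)
    show "semiring_hom (mpoly_eval (g \<circ> h) (g \<circ> \<sigma>))"
      using gh by (rule semiring_hom_mpoly_eval)
    show "(g \<circ> mpoly_eval h \<sigma>) (mconst c) = mpoly_eval (g \<circ> h) (g \<circ> \<sigma>) (mconst c)" for c
      using mpoly_eval_mconst[OF gh, of "g \<circ> \<sigma>" c] mpoly_eval_mconst[OF h, of \<sigma> c] by simp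
    show "(g \<circ> mpoly_eval h \<sigma>) (mvar i) = mpoly_eval (g \<circ> h) (g \<circ> \<sigma>) (mvar i)" for i
      using mpoly_eval_mvar[OF gh, of "g \<circ> \<sigma>" i] mpoly_eval_mvar[OF h, of \<sigma> i] by simp
  qed
  then show ?thesis
    by simp
qed

lemma mpoly_eval_mconst_mvar: "mpoly_eval mconst mvar p = p"
  using semiring_hom_mpoly_eqI[of "mpoly_eval mconst mvar" id]
  by (simp add: semiring_hom_mpoly_eval semiring_hom_mconst semiring_hom_id mpoly_eval_mconst
    mpoly_eval_mvar)

lemma mpoly_eval_cong:
  assumes "\<And>\<alpha> i. \<alpha> \<in> Poly_Mapping.keys p \<Longrightarrow> i \<in> Poly_Mapping.keys \<alpha> \<Longrightarrow> \<sigma> i = \<sigma>' i"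
  shows "mpoly_eval h \<sigma> p = mpoly_eval h \<sigma>' p"
  unfolding mpoly_eval_def monom_eval_def using assms by (auto intro!: sum.cong prod.cong)

section \<open>Partial derivatives and setting variables to zero\<close>

lemma mpderiv_single:
  "mpderiv i (Poly_Mapping.single \<alpha> c) =
     Poly_Mapping.single (\<alpha> - Poly_Mapping.single i 1) (of_nat (Poly_Mapping.lookup \<alpha> i) * c)"
  by (cases "c = 0") (auto simp: mpderiv_def)

lemma mpderiv_zero [simp]: "mpderiv i 0 = 0"
  by (simp add: mpderiv_def)

lemma mpderiv_add: "mpderiv i (p + q) = mpderiv i p + mpderiv i q"
  unfolding mpderiv_def
  by (rule setsum_keys_plus_distrib) (auto simp: distrib_left single_add)

lemma mpderiv_sum: "mpderiv i (sum f A) = (\<Sum>x\<in>A. mpderiv i (f x))"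
  by (induction A rule: infinite_finite_induct) (auto simp: mpderiv_add)

lemma single_diff_mult_single:
  "Poly_Mapping.single (\<alpha> - Poly_Mapping.single i 1) (of_nat (Poly_Mapping.lookup \<alpha> i) * a)
     * Poly_Mapping.single \<beta> b
   = Poly_Mapping.single (\<alpha> + \<beta> - Poly_Mapping.single i 1)
       (of_nat (Poly_Mapping.lookup \<alpha> i) * (a * b))"
proof (cases "Poly_Mapping.lookup \<alpha> i = 0")
  case False
  then have "\<alpha> - Poly_Mapping.single i 1 + \<beta> = \<alpha> + \<beta> - Poly_Mapping.single i 1"
    by (intro poly_mapping_eqI) (auto simp: lookup_add lookup_minus lookup_single when_def)
  then show ?thesis
    by (simp add: mult_single mult_ac)
qed simp

lemma mpderiv_mult: "mpderiv i (p * q) = mpderiv i p * q + p * mpderiv i q"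
proof (induction p arbitrary: q rule: poly_mapping_single_induct)
  case (single \<alpha> a)
  show ?case
  proof (induction q rule: poly_mapping_single_induct)
    case (single \<beta> b)
    show ?case
      using single_diff_mult_single[of \<alpha> i a \<beta> b] single_diff_mult_single[of \<beta> i b \<alpha> a]
      by (simp add: mult_single mpderiv_single lookup_add distrib_left distrib_right single_add
        add.commute mult.commute)
  qed (simp_all add: mpderiv_add algebra_simps)
qed (simp_all add: mpderiv_add algebra_simps)

lemma mpderiv_mconst [simp]: "mpderiv i (mconst c) = 0"
  by (simp add: mconst_def mpderiv_single)

lemma mpderiv_mvar: "mpderiv i (mvar j) = (if i = j then 1 else 0)"
  by (auto simp: mvar_def mpderiv_single lookup_single)

lemma fold_mpderiv_mconst_mult: "fold mpderiv ks (mconst c * p) = mconst c * fold mpderiv ks p"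
  by (induction ks arbitrary: p) (simp_all add: mpderiv_mult)

lemma mpderiv_mpoly_eval:
  assumes "\<And>k. mpderiv r (\<sigma> k) = (if k = j then 1 else 0)"
  shows "mpderiv r (mpoly_eval mconst \<sigma> p) = mpoly_eval mconst \<sigma> (mpderiv j p)"
proof (induction p rule: mpoly_induct)
  case (var i)
  then show ?case
    using assms[of i]
    by (simp add: mpderiv_mvar mpoly_eval_mvar semiring_hom_mpoly_eval semiring_hom_mconst
      semiring_homD eq_commute)
next
  case (mult p q)
  then show ?case
    by (simp add: mpderiv_mult mpoly_eval_add mpoly_eval_mult semiring_hom_mconst)
qed (simp_all add: mpderiv_add mpoly_eval_add mpoly_eval_mconst semiring_hom_mconst)

definition zero_subst :: "nat set \<Rightarrow> nat \<Rightarrow> 'a::comm_semiring_1 mpoly" where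
  "zero_subst S i = (if i \<in> S then 0 else mvar i)"

lemma monom_eval_zero_subst:
  "monom_eval (zero_subst S) \<alpha> =
     (if \<forall>i\<in>S. Poly_Mapping.lookup \<alpha> i = 0 then Poly_Mapping.single \<alpha> 1 else 0)"
proof (cases "\<forall>i\<in>S. Poly_Mapping.lookup \<alpha> i = 0")
  case True
  then show ?thesis
    unfolding monom_eval_def single_one_eq_prod_mvar
    by (auto simp: zero_subst_def in_keys_iff intro!: prod.cong)
next
  case False
  then obtain i where "i \<in> S" "Poly_Mapping.lookup \<alpha> i \<noteq> 0"
    by blast
  then show ?thesis
    unfolding monom_eval_def
    by (auto simp: zero_subst_def in_keys_iff zero_power intro!: prod_zero bexI[of _ i])
qed

lemma mset_zero_eq_mpoly_eval: "mset_zero S p = mpoly_eval mconst (zero_subst S) p"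
  unfolding mset_zero_def mpoly_eval_def monom_eval_zero_subst
  by (intro sum.cong) (auto simp: single_eq_mconst_mult[symmetric])

lemma mset_zero_mconst [simp]: "mset_zero S (mconst c) = mconst c"
  by (simp add: mset_zero_eq_mpoly_eval mpoly_eval_mconst semiring_hom_mconst)

lemma mset_zero_mvar: "mset_zero S (mvar i) = zero_subst S i"
  by (simp add: mset_zero_eq_mpoly_eval mpoly_eval_mvar semiring_hom_mconst)

lemma semiring_hom_mset_zero: "semiring_hom (mset_zero S)"
  unfolding mset_zero_eq_mpoly_eval[abs_def]
  by (rule semiring_hom_mpoly_eval[OF semiring_hom_mconst])

lemma map_eq_mpoly_eval:
  assumes h: "semiring_hom h"
  shows "Poly_Mapping.map h p = mpoly_eval (\<lambda>a. mconst (h a)) mvar p"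
proof -
  have hom: "semiring_hom (\<lambda>a. mconst (h a))"
    using semiring_hom_comp[OF semiring_hom_mconst h] by (simp add: comp_def)
  show ?thesis
  proof (induction p rule: poly_mapping_single_induct)
    case zero
    then show ?case
      using h by (simp add: map_eq_zero_iff)
  next
    case (single \<alpha> c)
    then show ?case
      using h hom by (simp add: mpoly_eval_single semiring_homD single_eq_mconst_mult[of \<alpha> "h c"]
        single_one_eq_prod_mvar monom_eval_def)
  next
    case (add p q)
    have "Poly_Mapping.map h (p + q) = Poly_Mapping.map h p + Poly_Mapping.map h q"
      using h by (intro poly_mapping_eqI) (simp add: lookup_map lookup_add semiring_homD)
    with add show ?case
      using hom by (simp add: mpoly_eval_add)
  qed
qed

lemma semiring_hom_map:
  assumes h: "semiring_hom h"
  shows "semiring_hom (Poly_Mapping.map h :: 'a::comm_semiring_1 mpoly \<Rightarrow> 'b::comm_semiring_1 mpoly)"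
proof -
  have "Poly_Mapping.map h = (mpoly_eval (\<lambda>a. mconst (h a)) mvar :: 'a mpoly \<Rightarrow> 'b mpoly)"
    using map_eq_mpoly_eval[OF h] by (rule ext)
  moreover have "semiring_hom (\<lambda>a. mconst (h a))"
    using semiring_hom_comp[OF semiring_hom_mconst h] by (simp add: comp_def)
  ultimately show ?thesis
    by (simp add: semiring_hom_mpoly_eval)
qed

lemma map_mconst: "semiring_hom h \<Longrightarrow> Poly_Mapping.map h (mconst c) = mconst (h c)"
  by (simp add: mconst_def semiring_homD)

lemma map_mvar: "semiring_hom h \<Longrightarrow> Poly_Mapping.map h (mvar i) = mvar i"
  by (simp add: mvar_def semiring_homD)

lemma map_mpderiv:
  assumes h: "semiring_hom h"
  shows "Poly_Mapping.map h (mpderiv i p) = mpderiv i (Poly_Mapping.map h p)"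
  by (induction p rule: mpoly_induct)
    (simp_all add: semiring_homD[OF semiring_hom_map[OF h]] map_mconst[OF h] map_mvar[OF h]
      mpderiv_mvar mpderiv_add mpderiv_mult)

lemma map_mset_zero:
  assumes h: "semiring_hom h"
  shows "Poly_Mapping.map h (mset_zero S p) = mset_zero S (Poly_Mapping.map h p)"
  by (induction p rule: mpoly_induct)
    (simp_all add: semiring_homD[OF semiring_hom_map[OF h]] semiring_homD[OF semiring_hom_mset_zero]
      map_mconst[OF h] map_mvar[OF h] mset_zero_mconst mset_zero_mvar zero_subst_def)

section \<open>Output polynomials of linear optical networks\<close>

definition linear_form :: "nat \<Rightarrow> (nat \<Rightarrow> 'a::comm_semiring_1) \<Rightarrow> 'a mpoly" where
  "linear_form N a = (\<Sum>j<N. mconst (a j) * mvar j)"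

definition mode_list :: "nat \<Rightarrow> (nat \<Rightarrow> nat) \<Rightarrow> nat list" where
  "mode_list N c = concat (map (\<lambda>i. replicate (c i) i) [0..<N])"

lemma length_mode_list: "length (mode_list N c) = (\<Sum>i<N. c i)"
  by (induction N) (simp_all add: mode_list_def)

lemma set_mode_list_subset: "set (mode_list N c) \<subseteq> {..<N}"
  by (auto simp: mode_list_def)

lemma prod_list_map_mode_list: "prod_list (map f (mode_list N c)) = (\<Prod>i<N. f i ^ c i)"
  by (induction N) (simp_all add: mode_list_def)

lemma mode_list_indicator: "mode_list N (\<lambda>i. if i < n then 1 else 0) = [0..<min n N]"
  by (induction N) (auto simp: mode_list_def min_def le_Suc_eq)

lemma mode_list_one: "mode_list N (\<lambda>i. 1) = [0..<N]"
  by (induction N) (simp_all add: mode_list_def)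

lemma fold_funpow_eq_fold_mode_list:
  "fold (\<lambda>j. f (a j) ^^ c j) [0..<M] = fold f (map a (mode_list M c))"
  by (induction M) (simp_all add: mode_list_def)

lemma Fout_eq_prod_list:
  "Fout emb N A ns =
     mconst (\<Prod>i<N. emb (complex_of_real (1 / sqrt (real (fact (ns i))))))
     * prod_list (map (\<lambda>i. linear_form N (A i)) (mode_list N ns))"
  unfolding Fout_def linear_form_def prod_list_map_mode_list
  by (simp add: prod.distrib semiring_hom_prod[OF semiring_hom_mconst])

lemma herald_eq_fold_mpderiv:
  "herald emb N M ms F =
     mconst (emb (1 / of_nat (\<Prod>j<M. fact (ms j))))
     * mset_zero {N - M..<N} (fold mpderiv (map ((+) (N - M)) (mode_list M ms)) F)"
  unfolding herald_def fold_funpow_eq_fold_mode_list ..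

lemma Gout_eq:
  "Gout emb N M A ns ms =
     mconst (emb (1 / of_nat (\<Prod>j<M. fact (ms j)))
             * (\<Prod>i<N. emb (complex_of_real (1 / sqrt (real (fact (ns i)))))))
     * mset_zero {N - M..<N} (fold mpderiv (map ((+) (N - M)) (mode_list M ms))
         (prod_list (map (\<lambda>i. linear_form N (A i)) (mode_list N ns))))"
  by (simp add: Gout_def herald_eq_fold_mpderiv Fout_eq_prod_list fold_mpderiv_mconst_mult
    semiring_homD[OF semiring_hom_mset_zero] mconst_mult mult.assoc)

lemma Gout_optimal:
  assumes "n \<le> N"
  shows "Gout id N m A (\<lambda>i. if i < n then 1 else 0) (\<lambda>j. 1) =
    mset_zero {N - m..<N} (fold mpderiv (map ((+) (N - m)) [0..<m])
      (prod_list (map (\<lambda>t. linear_form N (A t)) [0..<n])))"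
proof -
  have "(\<Prod>i<N. complex_of_real (1 / sqrt (real (fact (if i < n then 1 else 0))))) = 1"
    by (intro prod.neutral) simp
  then show ?thesis
    unfolding Gout_eq mode_list_indicator mode_list_one using assms by (simp add: min_def)
qed

lemma map_linear_form:
  "semiring_hom h \<Longrightarrow> Poly_Mapping.map h (linear_form N a) = linear_form N (\<lambda>j. h (a j))"
  by (simp add: linear_form_def semiring_hom_sum[OF semiring_hom_map]
    semiring_homD[OF semiring_hom_map] map_mconst map_mvar)

lemma map_fold_mpderiv:
  "semiring_hom h \<Longrightarrow> Poly_Mapping.map h (fold mpderiv ks F) = fold mpderiv ks (Poly_Mapping.map h F)"
  by (induction ks arbitrary: F) (simp_all add: map_mpderiv)

lemma map_Gout:
  assumes h: "semiring_hom h"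
  shows "Poly_Mapping.map h (Gout emb N M A ns ms) = Gout (h \<circ> emb) N M (\<lambda>i j. h (A i j)) ns ms"
  unfolding Gout_eq
  by (simp add: semiring_homD[OF semiring_hom_map[OF h]] semiring_homD[OF h] map_mconst[OF h]
    semiring_hom_prod[OF h] map_mset_zero[OF h] map_fold_mpderiv[OF h]
    semiring_hom_prod_list[OF semiring_hom_map[OF h]] map_linear_form[OF h] o_def)

lemma Gout_cong:
  assumes "\<And>i j. i < N \<Longrightarrow> j < N \<Longrightarrow> A i j = B i j"
  shows "Gout emb N M A ns ms = Gout emb N M B ns ms"
proof -
  have "linear_form N (A i) = linear_form N (B i)" if "i \<in> set (mode_list N ns)" for i
    using that set_mode_list_subset assms by (force simp: linear_form_def intro!: sum.cong)
  then show ?thesis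
    unfolding Gout_eq by (simp cong: map_cong)
qed

section \<open>Reduction to the optimal configuration\<close>

definition relabel :: "nat \<Rightarrow> (nat \<Rightarrow> nat option) \<Rightarrow> nat \<Rightarrow> 'a::comm_semiring_1 mpoly" where
  "relabel N \<pi> k = (\<Sum>l<N. if \<pi> l = Some k then mvar l else 0)"

lemma mpoly_eval_relabel_linear_form:
  assumes "\<And>l j. l < N \<Longrightarrow> \<pi> l = Some j \<Longrightarrow> j < N'"
  shows "mpoly_eval mconst (relabel N \<pi>) (linear_form N' a) =
    linear_form N (\<lambda>l. case \<pi> l of None \<Rightarrow> 0 | Some j \<Rightarrow> a j)"
proof -
  have "mpoly_eval mconst (relabel N \<pi>) (linear_form N' a) = (\<Sum>j<N'. mconst (a j) * relabel N \<pi> j)"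
    by (simp add: linear_form_def
      semiring_hom_sum[OF semiring_hom_mpoly_eval[OF semiring_hom_mconst]]
      mpoly_eval_mult mpoly_eval_mconst mpoly_eval_mvar semiring_hom_mconst)
  also have "\<dots> = (\<Sum>j<N'. \<Sum>l<N. if \<pi> l = Some j then mconst (a j) * mvar l else 0)"
    unfolding relabel_def sum_distrib_left by (intro sum.cong refl) simp
  also have "\<dots> = (\<Sum>l<N. \<Sum>j<N'. if \<pi> l = Some j then mconst (a j) * mvar l else 0)"
    by (rule sum.swap)
  also have "\<dots> = (\<Sum>l<N. mconst (case \<pi> l of None \<Rightarrow> 0 | Some j \<Rightarrow> a j) * mvar l)"
    by (rule sum.cong) (auto split: option.split dest: assms)
  finally show ?thesis
    by (simp add: linear_form_def)
qed

lemma mpoly_eval_relabel_prod_linear_forms: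
  assumes "\<And>l j. l < N \<Longrightarrow> \<pi> l = Some j \<Longrightarrow> j < N'"
  shows "mpoly_eval mconst (relabel N \<pi>) (prod_list (map (\<lambda>i. linear_form N' (A i)) ps)) =
    prod_list (map (\<lambda>t. linear_form N (\<lambda>l. case \<pi> l of None \<Rightarrow> 0 | Some j \<Rightarrow> A (ps ! t) j))
      [0..<length ps])"
proof -
  have "mpoly_eval mconst (relabel N \<pi>) (prod_list (map (\<lambda>i. linear_form N' (A i)) ps)) =
      prod_list (map (\<lambda>i. linear_form N (\<lambda>l. case \<pi> l of None \<Rightarrow> 0 | Some j \<Rightarrow> A i j)) ps)"
    by (simp add: semiring_hom_prod_list[OF semiring_hom_mpoly_eval[OF semiring_hom_mconst]]
      mpoly_eval_relabel_linear_form[OF assms] o_def)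
  also have "\<dots> = prod_list (map (\<lambda>t. linear_form N (\<lambda>l. case \<pi> l of None \<Rightarrow> 0 | Some j \<Rightarrow> A (ps ! t) j))
      [0..<length ps])"
    by (intro arg_cong[where f = prod_list] nth_equalityI) (simp_all cong: option.case_cong)
  finally show ?thesis .
qed

lemma mpderiv_relabel:
  assumes "l < N"
  shows "mpderiv l (relabel N \<pi> k) = (if \<pi> l = Some k then 1 else 0)"
proof -
  have "mpderiv l (relabel N \<pi> k) = (\<Sum>l'<N. if l' = l then (if \<pi> l = Some k then 1 else 0) else 0)"
    unfolding relabel_def mpderiv_sum by (intro sum.cong refl) (simp add: mpderiv_mvar)
  then show ?thesis
    using assms by simp
qed

lemma mset_zero_relabel:
  "mset_zero S (relabel N \<pi> k) = relabel N (\<lambda>l. if l \<in> S then None else \<pi> l) k"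
  unfolding relabel_def semiring_hom_sum[OF semiring_hom_mset_zero]
  by (intro sum.cong)
    (simp_all add: mset_zero_mvar zero_subst_def semiring_homD[OF semiring_hom_mset_zero])

lemma fold_mpderiv_mpoly_eval:
  assumes "list_all2 (\<lambda>y k. \<forall>k'. mpderiv y (\<sigma> k') = (if k' = k then 1 else 0)) ys ks"
  shows "fold mpderiv ys (mpoly_eval mconst \<sigma> X) = mpoly_eval mconst \<sigma> (fold mpderiv ks X)"
  using assms
  by (induction ys ks arbitrary: X rule: list_all2_induct) (simp_all add: mpderiv_mpoly_eval)

text \<open>
  Mode \<open>l\<close> of the optimal network comes from mode \<open>source_mode NT N ks l\<close> of the given one:
  target modes stay, the last \<open>length ks\<close> modes carry one heralded photon each (the \<open>r\<close>-th
  coming from mode \<open>ks ! r\<close>), and the remaining modes come from nowhere.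
\<close>

definition source_mode :: "nat \<Rightarrow> nat \<Rightarrow> nat list \<Rightarrow> nat \<Rightarrow> nat option" where
  "source_mode NT N ks l =
     (if l < NT then Some l
      else if N - length ks \<le> l \<and> l < N then Some (ks ! (l - (N - length ks)))
      else None)"

lemma source_mode_SomeE:
  assumes "source_mode NT N ks l = Some j"
  obtains "l < NT" "j = l" | "N - length ks \<le> l" "l < N" "j = ks ! (l - (N - length ks))"
proof (cases "l < NT")
  case True
  with assms have "j = l"
    by (simp add: source_mode_def)
  with True show ?thesis
    by (rule that(1))
next
  case False
  with assms have "N - length ks \<le> l" "l < N" "j = ks ! (l - (N - length ks))"
    by (simp_all add: source_mode_def split: if_split_asm)
  then show ?thesis
    by (rule that(2))
qed

lemma source_mode_less:
  assumes "source_mode NT N ks l = Some j" and "NT \<le> N'" and "set ks \<subseteq> {..<N'}"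
  shows "j < N'"
  using assms(1)
proof (cases rule: source_mode_SomeE)
  case 1
  then show ?thesis
    using assms(2) by simp
next
  case 2
  then have "l - (N - length ks) < length ks"
    by linarith
  with 2 have "j \<in> set ks"
    by simp
  then show ?thesis
    using assms(3) by auto
qed

lemma fold_mpderiv_relabel_source_mode:
  fixes X :: "'a::comm_semiring_1 mpoly"
  assumes "NT + length ks \<le> N"
  shows "fold mpderiv (map ((+) (N - length ks)) [0..<length ks])
      (mpoly_eval mconst (relabel N (source_mode NT N ks)) X)
    = mpoly_eval mconst (relabel N (source_mode NT N ks)) (fold mpderiv ks X)"
proof (rule fold_mpderiv_mpoly_eval)
  show "list_all2 (\<lambda>y k. \<forall>k'. mpderiv y (relabel N (source_mode NT N ks) k' :: 'a mpoly) =
      (if k' = k then 1 else 0)) (map ((+) (N - length ks)) [0..<length ks]) ks"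
    using assms by (auto simp: list_all2_conv_all_nth mpderiv_relabel source_mode_def)
qed

lemma mset_zero_relabel_source_mode:
  assumes "NT + length ks \<le> N" and "NT \<le> b"
  shows "mset_zero {N - length ks..<N} (mpoly_eval mconst (relabel N (source_mode NT N ks)) X)
    = mpoly_eval mconst (\<lambda>k. if k < NT then mvar k else 0) (mset_zero {b..<N'} X)"
    (is "mset_zero ?Z (mpoly_eval mconst ?\<sigma> X) = mpoly_eval mconst ?\<tau> (mset_zero ?Z' X)")
proof -
  have "mset_zero ?Z (?\<sigma> k) = (\<Sum>l<N. if l = k then ?\<tau> k else 0)" for k
    unfolding mset_zero_relabel unfolding relabel_def using assms(1)
    by (intro sum.cong refl) (auto simp: source_mode_def)
  then have "mset_zero ?Z (?\<sigma> k) = ?\<tau> k" for k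
    using assms(1) by simp
  moreover have "mpoly_eval mconst ?\<tau> (zero_subst ?Z' k) = ?\<tau> k" for k
    using assms(2) by (simp add: zero_subst_def mpoly_eval_mvar semiring_hom_mconst)
  ultimately have subst_eq: "mset_zero ?Z \<circ> ?\<sigma> = mpoly_eval mconst ?\<tau> \<circ> zero_subst ?Z'"
    by (simp add: fun_eq_iff)
  have const_eq: "mset_zero ?Z \<circ> mconst = mpoly_eval mconst ?\<tau> \<circ> mconst"
    by (simp add: fun_eq_iff mpoly_eval_mconst semiring_hom_mconst)
  have "mset_zero ?Z (mpoly_eval mconst ?\<sigma> X)
      = mpoly_eval (mset_zero ?Z \<circ> mconst) (mset_zero ?Z \<circ> ?\<sigma>) X"
    by (rule semiring_hom_mpoly_eval_comp[OF semiring_hom_mset_zero semiring_hom_mconst])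
  also have "\<dots>
      = mpoly_eval (mpoly_eval mconst ?\<tau> \<circ> mconst) (mpoly_eval mconst ?\<tau> \<circ> zero_subst ?Z') X"
    by (simp only: subst_eq const_eq)
  also have "\<dots> = mpoly_eval mconst ?\<tau> (mset_zero ?Z' X)"
    unfolding mset_zero_eq_mpoly_eval
    by (rule semiring_hom_mpoly_eval_comp
      [OF semiring_hom_mpoly_eval[OF semiring_hom_mconst] semiring_hom_mconst, symmetric])
  finally show ?thesis .
qed

lemma generable_optimal_configuration:
  assumes MN: "M \<le> N" and NT: "NT \<le> N - M"
    and ns: "(\<Sum>i<N. ns i) = n" and ms: "(\<Sum>j<M. ms j) = m"
    and vars_Q: "\<forall>\<alpha>\<in>Poly_Mapping.keys Q. Poly_Mapping.keys \<alpha> \<subseteq> {..<NT}"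
    and "generable N M ns ms Q"
  shows "generable (max n (NT + m)) m (\<lambda>i. if i < n then 1 else 0) (\<lambda>j. 1) Q"
proof -
  obtain A \<gamma> where gen: "mconst \<gamma> * Gout id N M A ns ms = Q"
    using assms(6) by (auto simp: generable_def)
  define N\<^sub>0 where "N\<^sub>0 = max n (NT + m)"
  define ps where "ps = mode_list N ns"
  define ks where "ks = map ((+) (N - M)) (mode_list M ms)"
  define \<pi> where "\<pi> = source_mode NT N\<^sub>0 ks"
  define A' where "A' = (\<lambda>t l. case \<pi> l of None \<Rightarrow> 0 | Some j \<Rightarrow> A (ps ! t) j)"
  define \<tau> :: "nat \<Rightarrow> complex mpoly" where "\<tau> = (\<lambda>k. if k < NT then mvar k else 0)"
  define c where
    "c = 1 / of_nat (\<Prod>j<M. fact (ms j)) * (\<Prod>i<N. complex_of_real (1 / sqrt (real (fact (ns i)))))"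
  define P where "P = prod_list (map (\<lambda>i. linear_form N (A i)) ps)"
  let ?S = "mpoly_eval mconst (relabel N\<^sub>0 \<pi>) :: complex mpoly \<Rightarrow> complex mpoly"
  have len: "length ps = n" "length ks = m"
    using ns ms by (simp_all add: ps_def ks_def length_mode_list)
  have bound: "NT + length ks \<le> N\<^sub>0"
    using len by (simp add: N\<^sub>0_def)
  have "set ks \<subseteq> {..<N}"
    using set_mode_list_subset[of M ms] MN by (auto simp: ks_def)
  then have \<pi>_range: "j < N" if "\<pi> l = Some j" for l j
    using that NT by (auto simp: \<pi>_def intro: source_mode_less)
  have S_P: "?S P = prod_list (map (\<lambda>t. linear_form N\<^sub>0 (A' t)) [0..<n])"
    using mpoly_eval_relabel_prod_linear_forms[OF \<pi>_range, where A = A and ps = ps]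
    by (simp add: P_def A'_def len)
  have "Q = mpoly_eval mconst \<tau> Q"
    using vars_Q
    by (subst mpoly_eval_cong[where \<sigma>' = mvar]) (auto simp: \<tau>_def mpoly_eval_mconst_mvar)
  also have "\<dots> = mconst (\<gamma> * c) * mpoly_eval mconst \<tau> (mset_zero {N - M..<N} (fold mpderiv ks P))"
    by (simp flip: gen mconst_mult add: Gout_eq c_def ps_def ks_def P_def mpoly_eval_mult
      mpoly_eval_mconst semiring_hom_mconst mult.assoc)
  also have "mpoly_eval mconst \<tau> (mset_zero {N - M..<N} (fold mpderiv ks P))
      = mset_zero {N\<^sub>0 - m..<N\<^sub>0} (?S (fold mpderiv ks P))"
    using mset_zero_relabel_source_mode
        [OF bound, where b = "N - M" and N' = N and X = "fold mpderiv ks P"] NT len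
    by (simp add: \<pi>_def \<tau>_def)
  also have "\<dots> = mset_zero {N\<^sub>0 - m..<N\<^sub>0} (fold mpderiv (map ((+) (N\<^sub>0 - m)) [0..<m]) (?S P))"
    using fold_mpderiv_relabel_source_mode[OF bound, where X = P] len by (simp add: \<pi>_def)
  also have "\<dots> = Gout id N\<^sub>0 m A' (\<lambda>i. if i < n then 1 else 0) (\<lambda>j. 1)"
    using Gout_optimal[of n N\<^sub>0 m A'] S_P by (simp add: N\<^sub>0_def)
  finally show ?thesis
    unfolding generable_def N\<^sub>0_def by blast
qed

section \<open>Nullstellensatz certificates\<close>

lemma nullstellensatz_cert_map_nonzero:
  fixes ev :: "upoly \<Rightarrow> 'b::comm_ring_1"
  assumes "has_nullstellensatz_cert P" and ev: "semiring_hom ev"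
  shows "Poly_Mapping.map ev P \<noteq> 0"
proof
  assume vanish: "Poly_Mapping.map ev P = 0"
  obtain \<beta> where cert: "1 = (\<Sum>\<alpha>\<in>Poly_Mapping.keys P. \<beta> \<alpha> * Poly_Mapping.lookup P \<alpha>)"
    using assms(1) by (auto simp: has_nullstellensatz_cert_def)
  have "(1::'b) = ev (\<Sum>\<alpha>\<in>Poly_Mapping.keys P. \<beta> \<alpha> * Poly_Mapping.lookup P \<alpha>)"
    by (simp flip: cert add: semiring_homD[OF ev])
  also have "\<dots> = (\<Sum>\<alpha>\<in>Poly_Mapping.keys P. ev (\<beta> \<alpha>) * Poly_Mapping.lookup (Poly_Mapping.map ev P) \<alpha>)"
    by (simp add: semiring_hom_sum[OF ev] semiring_homD[OF ev] lookup_map)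
  also have "\<dots> = 0"
    by (simp add: vanish)
  finally show False
    by simp
qed

lemma optimal_not_generable:
  assumes "has_nullstellensatz_cert (opt_system N n m Q)"
  shows "\<not> generable N m (\<lambda>i. if i < n then 1 else 0) (\<lambda>j. 1) Q"
proof
  assume "generable N m (\<lambda>i. if i < n then 1 else 0) (\<lambda>j. 1) Q"
  then obtain A \<gamma> where gen: "mconst \<gamma> * Gout id N m A (\<lambda>i. if i < n then 1 else 0) (\<lambda>j. 1) = Q"
    by (auto simp: generable_def)
  define \<rho> where "\<rho> k = (if k = 0 then \<gamma> else A ((k - 1) div N) ((k - 1) mod N))" for k
  define ev where "ev = mpoly_eval id \<rho>"
  have ev: "semiring_hom ev"
    unfolding ev_def by (rule semiring_hom_mpoly_eval[OF semiring_hom_id])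
  have ev_mconst: "ev (mconst c) = c" for c
    by (simp add: ev_def mpoly_eval_mconst semiring_hom_id)
  then have ev_comp_mconst: "ev \<circ> mconst = id"
    by (simp add: fun_eq_iff)
  have ev_gamma: "ev gamma_var = \<gamma>"
    by (simp add: ev_def gamma_var_def mpoly_eval_mvar semiring_hom_id \<rho>_def)
  have ev_A: "ev (A_var N i j) = A i j" if "j < N" for i j
    using that by (simp add: ev_def A_var_def mpoly_eval_mvar semiring_hom_id \<rho>_def)
  have "Poly_Mapping.map ev (Gout mconst N m (A_var N) (\<lambda>i. if i < n then 1 else 0) (\<lambda>j. 1))
      = Gout id N m A (\<lambda>i. if i < n then 1 else 0) (\<lambda>j. 1)"
    unfolding map_Gout[OF ev] ev_comp_mconst by (rule Gout_cong) (simp add: ev_A)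
  moreover have "Poly_Mapping.map ev (Poly_Mapping.map mconst Q) = Q"
    by (rule poly_mapping_eqI) (simp add: lookup_map ev_mconst semiring_homD[OF ev])
  ultimately have "Poly_Mapping.map ev (opt_system N n m Q) = 0"
    unfolding opt_system_def using gen
    by (simp add: semiring_hom_diff[OF semiring_hom_map[OF ev]]
      semiring_homD[OF semiring_hom_map[OF ev]] map_mconst[OF ev] ev_gamma)
  with nullstellensatz_cert_map_nonzero[OF assms ev] show False
    by contradiction
qed

theorem theorem2:
  fixes n m NT :: nat and Q :: "complex mpoly"
  assumes "m \<le> n" and "NT \<ge> 1"
    and "homog_target NT (n - m) Q"
    and "has_nullstellensatz_cert (opt_system (max n (NT + m)) n m Q)"
  shows "\<forall>N' M' (ns :: nat \<Rightarrow> nat) (ms :: nat \<Rightarrow> nat).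
           M' \<le> N' \<longrightarrow> NT \<le> N' - M' \<longrightarrow>
           (\<Sum>i<N'. ns i) = n \<longrightarrow> (\<Sum>j<M'. ms j) = m \<longrightarrow>
           \<not> generable N' M' ns ms Q"
proof (intro allI impI notI)
  fix N' M' :: nat and ns ms :: "nat \<Rightarrow> nat"
  assume config: "M' \<le> N'" "NT \<le> N' - M'" "(\<Sum>i<N'. ns i) = n" "(\<Sum>j<M'. ms j) = m"
    and gen: "generable N' M' ns ms Q"
  have vars_Q: "\<forall>\<alpha>\<in>Poly_Mapping.keys Q. Poly_Mapping.keys \<alpha> \<subseteq> {..<NT}"
    using assms(3) by (simp add: homog_target_def)
  show False
    using generable_optimal_configuration[OF config vars_Q gen] optimal_not_generable[OF assms(4)]
    by contradiction
qed

end
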